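(* Let $(M,g)$ be an asymptotically conic manifold of dimension $n\ge 3$, let $0<\lambda\le 3$, and let $K$ be an integral operator whose kernel satisfies, for all $m,m'\in M$, \[ |K(m,m')|\le C\frac{(xx')^{\frac{n-1}{2}}\big(\chi(\tfrac{x}{\lambda})+\chi(\tfrac{x'}{\lambda})\big)}{x+x'+\lambda},\qquad x=x(m),\ x'=x(m'). \] Then for $p \in [\frac{n}{2}, \frac{n+1}{2}]$ and $W_1, W_2 \in L^{2p}(M)$, the operator $W_1 K W_2$ is Hilbert–Schmidt and \[ \| W_1 K W_2 \|_{\mathcal{C}_2}\le C' \lambda^{-2+\frac{n}{p}} \| W_1 \|_{L^{2p}(M)}\| W_2 \|_{L^{2p}(M)}, \] where $C'$ depends on $C$, $p$, $\chi$ and $(M,g)$ but not on $\lambda$, $W_1$, $W_2$.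
   Context: $(M,g)$ is asymptotically conic: $M$ is the interior of a compact manifold with boundary $\overline M$ and $x$ is a smooth boundary defining function on $\overline M$ (positive on $M$) such that outside a compact set $(M,g)$ is isometric to $(0,\epsilon_0)_x\times\partial\overline M$ with $g=\frac{dx^2}{x^4}+\frac{h(x)}{x^2}$, $h(x)$ a smooth family of metrics on $\partial\overline M$. $\chi\in C_0^\infty((-\varepsilon,\varepsilon),[0,\infty))$ with $\chi=1$ on $[-\varepsilon/2,\varepsilon/2]$, for a small fixed $\varepsilon>0$. $W_j$ act by multiplication; $\mathcal{C}_2$ is the Hilbert–Schmidt class, with $\|A\|_{\mathcal{C}_2}^2=\int\!\!\int|A(m,m')|^2dV_g(m)dV_g(m')$ for an integral operator $A$. *)

theory Defs
  imports "HOL-Analysis.Analysis"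
begin

text \<open>Measure-theoretic model of an asymptotically conic manifold of dimension n.
  M is the Riemannian volume measure, x the boundary defining function.
  The collar (0,eps0) x Y (Y = boundary with a finite reference measure) is mapped
  injectively into M by Phi, with x(Phi(t,y)) = t, and the volume form there is
  t^(-n-1) rho(t,y) dt dY, rho bounded above and below by positive constants
  (rho = ratio of the volume densities of h(t) and the reference metric).
  The complement of the collar (a compact set) has finite volume and x is
  bounded above and below by positive constants there.\<close>

definition ac_structure ::
  "nat \<Rightarrow> 'm measure \<Rightarrow> ('m \<Rightarrow> real) \<Rightarrow> real \<Rightarrow> 'y measure
     \<Rightarrow> (real \<times> 'y \<Rightarrow> 'm) \<Rightarrow> (real \<times> 'y \<Rightarrow> real) \<Rightarrow> bool" where
  "ac_structure n M x eps0 Y Phi rho \<longleftrightarrow>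
     sigma_finite_measure M \<and>
     x \<in> borel_measurable M \<and> (\<forall>m\<in>space M. 0 < x m) \<and>
     0 < eps0 \<and> finite_measure Y \<and>
     Phi \<in> (lborel \<Otimes>\<^sub>M Y) \<rightarrow>\<^sub>M M \<and>
     inj_on Phi ({0<..<eps0} \<times> space Y) \<and>
     Phi ` ({0<..<eps0} \<times> space Y) \<in> sets M \<and>
     (\<forall>t\<in>{0<..<eps0}. \<forall>y\<in>space Y. x (Phi (t, y)) = t) \<and>
     rho \<in> borel_measurable (lborel \<Otimes>\<^sub>M Y) \<and>
     (\<exists>c1 c2. 0 < c1 \<and> (\<forall>t\<in>{0<..<eps0}. \<forall>y\<in>space Y.
                c1 \<le> rho (t, y) \<and> rho (t, y) \<le> c2)) \<and>
     (\<forall>A\<in>sets M. emeasure M (A \<inter> Phi ` ({0<..<eps0} \<times> space Y)) =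
        (\<integral>\<^sup>+ z. indicator ({0<..<eps0} \<times> space Y) z * indicator A (Phi z)
              * ennreal (fst z powr (- real (n + 1)) * rho z) \<partial>(lborel \<Otimes>\<^sub>M Y))) \<and>
     emeasure M (space M - Phi ` ({0<..<eps0} \<times> space Y)) < \<infinity> \<and>
     (\<exists>c B. 0 < c \<and> (\<forall>m\<in>space M - Phi ` ({0<..<eps0} \<times> space Y).
                c \<le> x m \<and> x m \<le> B))"

definition cutoff :: "real \<Rightarrow> (real \<Rightarrow> real) \<Rightarrow> bool" where
  "cutoff eps chi \<longleftrightarrow> 0 < eps \<and>
     (\<forall>k t. (deriv ^^ k) chi differentiable (at t)) \<and>
     (\<exists>d. 0 < d \<and> d < eps \<and> (\<forall>t. d \<le> \<bar>t\<bar> \<longrightarrow> chi t = 0)) \<and>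
     (\<forall>t. 0 \<le> chi t) \<and>
     (\<forall>t. \<bar>t\<bar> \<le> eps / 2 \<longrightarrow> chi t = 1)"

definition in_Lp :: "'m measure \<Rightarrow> real \<Rightarrow> ('m \<Rightarrow> complex) \<Rightarrow> bool" where
  "in_Lp M q W \<longleftrightarrow> W \<in> borel_measurable M \<and> integrable M (\<lambda>m. norm (W m) powr q)"

definition Lp_norm :: "'m measure \<Rightarrow> real \<Rightarrow> ('m \<Rightarrow> complex) \<Rightarrow> real" where
  "Lp_norm M q W = (\<integral>m. norm (W m) powr q \<partial>M) powr (1 / q)"

text \<open>An integral operator with kernel k is Hilbert-Schmidt iff k is in L^2(M x M);
  its Hilbert-Schmidt norm is the L^2 norm of the kernel.\<close>
definition hilbert_schmidt :: "'m measure \<Rightarrow> ('m \<times> 'm \<Rightarrow> complex) \<Rightarrow> bool" where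
  "hilbert_schmidt M k \<longleftrightarrow> k \<in> borel_measurable (M \<Otimes>\<^sub>M M) \<and>
     integrable (M \<Otimes>\<^sub>M M) (\<lambda>z. (norm (k z))\<^sup>2)"

definition hs_norm :: "'m measure \<Rightarrow> ('m \<times> 'm \<Rightarrow> complex) \<Rightarrow> real" where
  "hs_norm M k = sqrt (\<integral>z. (norm (k z))\<^sup>2 \<partial>(M \<Otimes>\<^sub>M M))"

end

theory Submission
  imports Defs
begin

(* Bounding x + x' + lam from below by x' + lam and by x + lam and using (a + b)^2 <= 2a^2 + 2b^2,
   the kernel satisfies |K(m,m')|^2 <= 2 C^2 (F(x) G(x') + G(x) F(x')) with
   F(t) = t^(n-1) chi(t/lam)^2 and G(t) = t^(n-1) / (t + lam)^2.  The squared Hilbert-Schmidt norm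
   of W1 K W2 is therefore bounded by products of the integrals of |W_i|^2 F(x) and |W_i|^2 G(x),
   and Hoelder's inequality with exponents p and q = p/(p-1) bounds each of these by
   ||W_i||_(2p)^2 times the L^q norm of F(x) or G(x).  In the collar the volume is comparable to
   t^(-n-1) dt dY, so ||F(x)||_q^q <~ lam^a and ||G(x)||_q^q <~ lam^(a-2q) with a = (n-1)q - n,
   which lies in (0, 2q) because n/3 < p < n; on the compact part x is bounded above and below,
   which costs only a constant since lam <= 3.  In the squared norm the powers of lam combine to
   lam^(2(n/p - 2)). *)

lemma nn_integral_Holder_le:
  fixes f g :: "'a \<Rightarrow> real"
  assumes [measurable]: "f \<in> borel_measurable M" "g \<in> borel_measurable M"
    and f0: "\<And>m. 0 \<le> f m" and g0: "\<And>m. 0 \<le> g m"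
    and p: "1 < p" and q: "1 < q" and pq: "1/p + 1/q = 1"
    and A: "(\<integral>\<^sup>+ m. f m powr p \<partial>M) \<le> ennreal A"
    and B: "(\<integral>\<^sup>+ m. g m powr q \<partial>M) \<le> ennreal B"
  shows "(\<integral>\<^sup>+ m. f m * g m \<partial>M) \<le> ennreal (A powr (1/p) * B powr (1/q))"
proof (cases "0 < A \<and> 0 < B")
  case False
  then have "AE m in M. f m powr p = 0 \<or> g m powr q = 0"
    using A B by (auto simp: nn_integral_0_iff_AE ennreal_neg elim: eventually_mono)
  then have "AE m in M. f m * g m = 0"
    by eventually_elim auto
  then have "(\<integral>\<^sup>+ m. f m * g m \<partial>M) = 0"
    by (subst nn_integral_0_iff_AE) (auto elim: eventually_mono)
  then show ?thesis by simp
next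
  case True
  define a where "a = A powr (1/p)"
  define b where "b = B powr (1/q)"
  have a: "0 < a" "a powr p = A" and b: "0 < b" "b powr q = B"
    using True p q by (auto simp: a_def b_def powr_powr)
  have Young: "f m * g m \<le> a * b / (p * A) * f m powr p + a * b / (q * B) * g m powr q" for m
  proof -
    have "(f m / a) * (g m / b) \<le> (f m / a) powr p / p + (g m / b) powr q / q"
      using f0 g0 a b by (intro Youngs_inequality p q pq) auto
    then show ?thesis
      using a b f0[of m] g0[of m] True p q by (simp add: powr_divide field_simps)
  qed
  have "(\<integral>\<^sup>+ m. f m * g m \<partial>M)
      \<le> (\<integral>\<^sup>+ m. ennreal (a * b / (p * A)) * f m powr p + ennreal (a * b / (q * B)) * g m powr q \<partial>M)"
    using Young a b True p q
    by (intro nn_integral_mono)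
      (simp add: ennreal_mult'[symmetric] ennreal_plus[symmetric] del: ennreal_plus)
  also have "\<dots> = ennreal (a * b / (p * A)) * (\<integral>\<^sup>+ m. f m powr p \<partial>M)
      + ennreal (a * b / (q * B)) * (\<integral>\<^sup>+ m. g m powr q \<partial>M)"
    by (simp add: nn_integral_add nn_integral_cmult)
  also have "\<dots> \<le> ennreal (a * b / (p * A)) * ennreal A + ennreal (a * b / (q * B)) * ennreal B"
    by (intro add_mono mult_left_mono A B) auto
  also have "\<dots> = ennreal (a * b * (1/p + 1/q))"
    using a b True p q
    by (simp add: ennreal_mult[symmetric] ennreal_plus[symmetric] field_simps del: ennreal_plus)
  finally show ?thesis by (simp add: pq a_def b_def)
qed

lemma nn_integral_pair_measure_mult:
  assumes "sigma_finite_measure N"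
    and [measurable]: "u \<in> borel_measurable M" "v \<in> borel_measurable N"
  shows "(\<integral>\<^sup>+ z. u (fst z) * v (snd z) \<partial>(M \<Otimes>\<^sub>M N)) = (\<integral>\<^sup>+ m. u m \<partial>M) * (\<integral>\<^sup>+ m. v m \<partial>N)"
proof -
  interpret N: sigma_finite_measure N by (rule assms)
  have "(\<integral>\<^sup>+ z. u (fst z) * v (snd z) \<partial>(M \<Otimes>\<^sub>M N)) = (\<integral>\<^sup>+ m. \<integral>\<^sup>+ m'. u m * v m' \<partial>N \<partial>M)"
    by (subst N.nn_integral_fst[symmetric]) auto
  also have "\<dots> = (\<integral>\<^sup>+ m. u m \<partial>M) * (\<integral>\<^sup>+ m. v m \<partial>N)"
    by (simp add: nn_integral_cmult nn_integral_multc)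
  finally show ?thesis .
qed

lemma nn_integral_sq_weighted_le:
  fixes W :: "'m \<Rightarrow> complex" and F :: "'m \<Rightarrow> real"
  assumes W: "in_Lp M (2 * p) W"
    and p: "1 < p" and q: "1 < q" and pq: "1/p + 1/q = 1"
    and [measurable]: "F \<in> borel_measurable M" and F0: "\<And>m. 0 \<le> F m"
    and a: "(\<integral>\<^sup>+ m. F m powr q \<partial>M) \<le> ennreal a"
  shows "(\<integral>\<^sup>+ m. (norm (W m))\<^sup>2 * F m \<partial>M) \<le> ennreal ((Lp_norm M (2 * p) W)\<^sup>2 * a powr (1/q))"
proof -
  define A where "A = (\<integral>m. norm (W m) powr (2 * p) \<partial>M)"
  have [measurable]: "W \<in> borel_measurable M" and int: "integrable M (\<lambda>m. norm (W m) powr (2 * p))"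
    using W by (auto simp: in_Lp_def)
  have "(\<integral>\<^sup>+ m. ((norm (W m))\<^sup>2) powr p \<partial>M) = (\<integral>\<^sup>+ m. norm (W m) powr (2 * p) \<partial>M)"
    using p by (intro nn_integral_cong) (simp add: powr_powr flip: powr_numeral)
  also have "\<dots> = ennreal A"
    unfolding A_def by (rule nn_integral_eq_integral[OF int]) auto
  finally have "(\<integral>\<^sup>+ m. (norm (W m))\<^sup>2 * F m \<partial>M) \<le> ennreal (A powr (1/p) * a powr (1/q))"
    using nn_integral_Holder_le[OF _ _ _ F0 p q pq _ a] by simp
  also have "A powr (1/p) = (Lp_norm M (2 * p) W)\<^sup>2"
    by (simp add: Lp_norm_def A_def power2_eq_square flip: powr_add)
  finally show ?thesis .
qed

lemma hilbert_schmidt_if_nn_integral_le: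
  assumes [measurable]: "k \<in> borel_measurable (M \<Otimes>\<^sub>M M)"
    and R: "(\<integral>\<^sup>+ z. (norm (k z))\<^sup>2 \<partial>(M \<Otimes>\<^sub>M M)) \<le> ennreal R" and "0 \<le> R"
  shows "hilbert_schmidt M k \<and> hs_norm M k \<le> sqrt R"
proof
  show "hilbert_schmidt M k"
    using R by (auto simp: hilbert_schmidt_def integrable_iff_bounded intro: le_less_trans)
  have "(\<integral>z. (norm (k z))\<^sup>2 \<partial>(M \<Otimes>\<^sub>M M)) = enn2real (\<integral>\<^sup>+ z. (norm (k z))\<^sup>2 \<partial>(M \<Otimes>\<^sub>M M))"
    by (rule integral_eq_nn_integral) auto
  also have "\<dots> \<le> R"
    using \<open>0 \<le> R\<close> R by (rule enn2real_leI)
  finally show "hs_norm M k \<le> sqrt R"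
    by (simp add: hs_norm_def)
qed

lemma nn_integral_sq_kernel_le:
  fixes K :: "'m \<Rightarrow> 'm \<Rightarrow> complex" and W1 W2 :: "'m \<Rightarrow> complex" and F G :: "'m \<Rightarrow> real"
  assumes "sigma_finite_measure M"
    and [measurable]: "W1 \<in> borel_measurable M" "W2 \<in> borel_measurable M"
      "F \<in> borel_measurable M" "G \<in> borel_measurable M"
    and F0: "\<And>m. 0 \<le> F m" and G0: "\<And>m. 0 \<le> G m"
    and K: "\<And>m m'. m \<in> space M \<Longrightarrow> m' \<in> space M \<Longrightarrow>
              (norm (K m m'))\<^sup>2 \<le> c * (F m * G m' + G m * F m')" and "0 \<le> c"
  shows "(\<integral>\<^sup>+ z. (norm (W1 (fst z) * K (fst z) (snd z) * W2 (snd z)))\<^sup>2 \<partial>(M \<Otimes>\<^sub>M M))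
    \<le> ennreal c * ((\<integral>\<^sup>+ m. (norm (W1 m))\<^sup>2 * F m \<partial>M) * (\<integral>\<^sup>+ m. (norm (W2 m))\<^sup>2 * G m \<partial>M)
                  + (\<integral>\<^sup>+ m. (norm (W1 m))\<^sup>2 * G m \<partial>M) * (\<integral>\<^sup>+ m. (norm (W2 m))\<^sup>2 * F m \<partial>M))"
proof -
  define w1 where "w1 m = (norm (W1 m))\<^sup>2" for m
  define w2 where "w2 m = (norm (W2 m))\<^sup>2" for m
  have [measurable]: "w1 \<in> borel_measurable M" "w2 \<in> borel_measurable M"
    unfolding w1_def w2_def by measurable
  have "(\<integral>\<^sup>+ z. (norm (W1 (fst z) * K (fst z) (snd z) * W2 (snd z)))\<^sup>2 \<partial>(M \<Otimes>\<^sub>M M))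
      \<le> (\<integral>\<^sup>+ z. ennreal c * (ennreal (w1 (fst z) * F (fst z)) * ennreal (w2 (snd z) * G (snd z))
                + ennreal (w1 (fst z) * G (fst z)) * ennreal (w2 (snd z) * F (snd z))) \<partial>(M \<Otimes>\<^sub>M M))"
  proof (intro nn_integral_mono)
    fix z assume "z \<in> space (M \<Otimes>\<^sub>M M)"
    then obtain m m' where z: "z = (m, m')" "m \<in> space M" "m' \<in> space M"
      by (auto simp: space_pair_measure)
    have "(norm (W1 m * K m m' * W2 m'))\<^sup>2 = w1 m * (norm (K m m'))\<^sup>2 * w2 m'"
      by (simp add: w1_def w2_def norm_mult power_mult_distrib)
    also have "\<dots> \<le> w1 m * (c * (F m * G m' + G m * F m')) * w2 m'"
      using K[OF z(2,3)] by (intro mult_right_mono mult_left_mono) (auto simp: w1_def w2_def)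
    finally show "ennreal ((norm (W1 (fst z) * K (fst z) (snd z) * W2 (snd z)))\<^sup>2)
      \<le> ennreal c * (ennreal (w1 (fst z) * F (fst z)) * ennreal (w2 (snd z) * G (snd z))
                + ennreal (w1 (fst z) * G (fst z)) * ennreal (w2 (snd z) * F (snd z)))"
      using F0 G0 \<open>0 \<le> c\<close>
      by (simp add: z w1_def w2_def ennreal_mult'[symmetric] ennreal_plus[symmetric] algebra_simps
               del: ennreal_plus)
  qed
  also have "\<dots> = ennreal c * ((\<integral>\<^sup>+ m. w1 m * F m \<partial>M) * (\<integral>\<^sup>+ m. w2 m * G m \<partial>M)
                + (\<integral>\<^sup>+ m. w1 m * G m \<partial>M) * (\<integral>\<^sup>+ m. w2 m * F m \<partial>M))"
    by (simp add: nn_integral_cmult nn_integral_add)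
      (subst (1 2) nn_integral_pair_measure_mult[OF \<open>sigma_finite_measure M\<close>]; simp)
  finally show ?thesis
    by (simp add: w1_def w2_def)
qed

lemma hilbert_schmidt_weighted_kernel:
  fixes K :: "'m \<Rightarrow> 'm \<Rightarrow> complex" and W1 W2 :: "'m \<Rightarrow> complex" and F G :: "'m \<Rightarrow> real"
  assumes "sigma_finite_measure M"
    and p: "1 < p" and q: "1 < q" and pq: "1/p + 1/q = 1"
    and [measurable]: "F \<in> borel_measurable M" "G \<in> borel_measurable M"
    and F0: "\<And>m. 0 \<le> F m" and G0: "\<And>m. 0 \<le> G m"
    and a: "(\<integral>\<^sup>+ m. F m powr q \<partial>M) \<le> ennreal a"
    and b: "(\<integral>\<^sup>+ m. G m powr q \<partial>M) \<le> ennreal b"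
    and [measurable]: "(\<lambda>(m, m'). K m m') \<in> borel_measurable (M \<Otimes>\<^sub>M M)"
    and K: "\<And>m m'. m \<in> space M \<Longrightarrow> m' \<in> space M \<Longrightarrow>
              (norm (K m m'))\<^sup>2 \<le> c * (F m * G m' + G m * F m')" and "0 \<le> c"
    and W1: "in_Lp M (2 * p) W1" and W2: "in_Lp M (2 * p) W2"
  shows "hilbert_schmidt M (\<lambda>(m, m'). W1 m * K m m' * W2 m') \<and>
         hs_norm M (\<lambda>(m, m'). W1 m * K m m' * W2 m')
           \<le> sqrt (2 * c) * (a * b) powr (1 / (2 * q)) * Lp_norm M (2 * p) W1 * Lp_norm M (2 * p) W2"
proof -
  define N1 where "N1 = Lp_norm M (2 * p) W1"
  define N2 where "N2 = Lp_norm M (2 * p) W2"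
  have N0: "0 \<le> N1" "0 \<le> N2"
    by (simp_all add: N1_def N2_def Lp_norm_def)
  have [measurable]: "W1 \<in> borel_measurable M" "W2 \<in> borel_measurable M"
    using W1 W2 by (auto simp: in_Lp_def)
  have "(\<integral>\<^sup>+ z. (norm (W1 (fst z) * K (fst z) (snd z) * W2 (snd z)))\<^sup>2 \<partial>(M \<Otimes>\<^sub>M M))
    \<le> ennreal c * ((\<integral>\<^sup>+ m. (norm (W1 m))\<^sup>2 * F m \<partial>M) * (\<integral>\<^sup>+ m. (norm (W2 m))\<^sup>2 * G m \<partial>M)
                  + (\<integral>\<^sup>+ m. (norm (W1 m))\<^sup>2 * G m \<partial>M) * (\<integral>\<^sup>+ m. (norm (W2 m))\<^sup>2 * F m \<partial>M))"
    by (rule nn_integral_sq_kernel_le) (use assms in auto)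
  also have "\<dots> \<le> ennreal c * (ennreal (N1\<^sup>2 * a powr (1/q)) * ennreal (N2\<^sup>2 * b powr (1/q))
                + ennreal (N1\<^sup>2 * b powr (1/q)) * ennreal (N2\<^sup>2 * a powr (1/q)))"
    unfolding N1_def N2_def
    by (intro mult_left_mono add_mono mult_mono nn_integral_sq_weighted_le[OF _ p q pq]
        W1 W2 a b F0 G0) auto
  also have "\<dots> = ennreal ((sqrt (2 * c) * (a * b) powr (1 / (2 * q)) * N1 * N2)\<^sup>2)"
    using \<open>0 \<le> c\<close> N0
    by (simp add: ennreal_mult[symmetric] ennreal_plus[symmetric] power_mult_distrib powr_mult
          power2_eq_square algebra_simps flip: powr_add del: ennreal_plus)
  finally have "hilbert_schmidt M (\<lambda>(m, m'). W1 m * K m m' * W2 m') \<and>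
      hs_norm M (\<lambda>(m, m'). W1 m * K m m' * W2 m')
        \<le> sqrt ((sqrt (2 * c) * (a * b) powr (1 / (2 * q)) * N1 * N2)\<^sup>2)"
    by (intro hilbert_schmidt_if_nn_integral_le) (auto simp: split_beta')
  then show ?thesis
    using \<open>0 \<le> c\<close> N0 by (simp add: N1_def N2_def)
qed

lemma kernel_majorant_sq_le:
  fixes X X' lam a b C e :: real
  assumes X: "0 < X" "0 < X'" and lam: "0 < lam"
  shows "(C * (X * X') powr (e / 2) * (a + b) / (X + X' + lam))\<^sup>2
    \<le> 2 * C\<^sup>2 * (X powr e * a\<^sup>2 * (X' powr e / (X' + lam)\<^sup>2)
                  + X powr e / (X + lam)\<^sup>2 * (X' powr e * b\<^sup>2))"
proof -
  define D where "D = X + X' + lam"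
  have D: "(X' + lam)\<^sup>2 \<le> D\<^sup>2" "(X + lam)\<^sup>2 \<le> D\<^sup>2" "0 < X' + lam" "0 < X + lam" "0 < D"
    using X lam by (auto simp: D_def intro!: power_mono)
  have "((X * X') powr (e / 2))\<^sup>2 = (X * X') powr e"
    by (simp add: power2_eq_square flip: powr_add)
  also have "\<dots> = X powr e * X' powr e"
    using X by (simp add: powr_mult)
  finally have "(C * (X * X') powr (e / 2) * (a + b) / D)\<^sup>2
      = C\<^sup>2 * (X powr e * X' powr e) * (a + b)\<^sup>2 / D\<^sup>2"
    by (simp add: power_mult_distrib power_divide)
  also have "\<dots> \<le> C\<^sup>2 * (X powr e * X' powr e) * (2 * a\<^sup>2 + 2 * b\<^sup>2) / D\<^sup>2"
  proof -
    have "(a + b)\<^sup>2 \<le> 2 * a\<^sup>2 + 2 * b\<^sup>2"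
      using zero_le_power2[of "a - b"] by (simp add: power2_eq_square algebra_simps)
    moreover have "0 \<le> C\<^sup>2 * (X powr e * X' powr e)"
      by simp
    ultimately show ?thesis
      by (intro divide_right_mono mult_left_mono) auto
  qed
  also have "\<dots> = 2 * C\<^sup>2 * (X powr e * a\<^sup>2 * (X' powr e / D\<^sup>2)
                           + X powr e / D\<^sup>2 * (X' powr e * b\<^sup>2))"
    by (simp add: add_divide_distrib algebra_simps)
  also have "\<dots> \<le> 2 * C\<^sup>2 * (X powr e * a\<^sup>2 * (X' powr e / (X' + lam)\<^sup>2)
                           + X powr e / (X + lam)\<^sup>2 * (X' powr e * b\<^sup>2))"
    using D by (intro mult_left_mono add_mono mult_right_mono divide_left_mono) auto
  finally show ?thesis by (simp add: D_def)
qed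

lemma powr_mult_powr_minus_Suc:
  fixes t a :: real
  shows "t powr a * t powr (- real (n + 1)) = t powr (a - real n - 1)"
proof -
  have "t powr a * t powr (- real (n + 1)) = t powr (a + - real (n + 1))"
    by (simp only: powr_add)
  also have "a + - real (n + 1) = a - real n - 1"
    by simp
  finally show ?thesis .
qed

lemma nn_integral_powr_from_0:
  assumes "0 < b" "0 \<le> a"
  shows "(\<integral>\<^sup>+ t\<in>{0..a}. t powr (b - 1) \<partial>lborel) = ennreal (a powr b / b)"
  using has_integral_powr_from_0[of "b - 1" a] assms
  by (intro nn_integral_has_integral_lebesgue') auto

lemma nn_integral_powr_to_inf:
  assumes "e < -1" "0 < a"
  shows "(\<integral>\<^sup>+ t\<in>{a..}. t powr e \<partial>lborel) = ennreal (- (a powr (e + 1)) / (e + 1))"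
  using has_integral_powr_to_inf[OF assms] assms
  by (intro nn_integral_has_integral_lebesgue') auto

lemma nn_integral_powr_div_shift_le:
  fixes lam a b :: real
  assumes lam: "0 < lam" and "0 < a" "a < b"
  shows "(\<integral>\<^sup>+ t\<in>{0<..}. t powr (a - 1) / (t + lam) powr b \<partial>lborel)
           \<le> ennreal ((1 / a + 1 / (b - a)) * lam powr (a - b))"
proof -
  have "(\<integral>\<^sup>+ t\<in>{0<..}. t powr (a - 1) / (t + lam) powr b \<partial>lborel)
      \<le> (\<integral>\<^sup>+ t. ennreal (lam powr (- b)) * (ennreal (t powr (a - 1)) * indicator {0..lam} t)
              + ennreal (t powr (a - 1 - b)) * indicator {lam..} t \<partial>lborel)"
  proof (intro nn_integral_mono)
    fix t :: real
    have "t powr (a - 1) / (t + lam) powr b \<le> lam powr (- b) * t powr (a - 1)" if "0 < t" "t \<le> lam"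
      using that lam assms by (simp add: powr_minus divide_inverse mult.commute
          mult_left_mono le_imp_inverse_le powr_mono2)
    moreover have "t powr (a - 1) / (t + lam) powr b \<le> t powr (a - 1 - b)" if "lam \<le> t"
      using that lam assms by (simp add: powr_diff divide_left_mono powr_mono2 mult_pos_pos)
    ultimately show "ennreal (t powr (a - 1) / (t + lam) powr b) * indicator {0<..} t
        \<le> ennreal (lam powr (- b)) * (ennreal (t powr (a - 1)) * indicator {0..lam} t)
              + ennreal (t powr (a - 1 - b)) * indicator {lam..} t"
      by (auto simp: indicator_def ennreal_mult'[symmetric]
          intro: ennreal_leI add_increasing[OF _ ennreal_leI])
  qed
  also have "\<dots> = ennreal (lam powr (- b)) * ennreal (lam powr a / a)
      + ennreal (- (lam powr (a - 1 - b + 1)) / (a - 1 - b + 1))"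
    using assms
    by (simp add: nn_integral_add nn_integral_cmult nn_integral_powr_from_0 nn_integral_powr_to_inf)
  also have "\<dots> = ennreal ((1 / a + 1 / (b - a)) * lam powr (a - b))"
    using assms
    by (simp add: ennreal_mult'[symmetric] ennreal_plus[symmetric] field_simps powr_diff powr_minus
        del: ennreal_plus)
  finally show ?thesis .
qed

lemma nn_integral_decay_weight_collar_le:
  fixes lam q e :: real
  assumes lam: "0 < lam" and al: "0 < e * q - real n" "e * q - real n < 2 * q"
  shows "(\<integral>\<^sup>+ t\<in>{0<..<eps0}. (t powr e / (t + lam)\<^sup>2) powr q * t powr (- real (n + 1)) \<partial>lborel)
    \<le> ennreal ((1 / (e * q - real n) + 1 / (2 * q - (e * q - real n)))
                * lam powr (e * q - real n - 2 * q))"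
proof -
  have "(\<integral>\<^sup>+ t\<in>{0<..<eps0}. (t powr e / (t + lam)\<^sup>2) powr q * t powr (- real (n + 1)) \<partial>lborel)
      \<le> (\<integral>\<^sup>+ t\<in>{0<..}. t powr (e * q - real n - 1) / (t + lam) powr (2 * q) \<partial>lborel)"
  proof (intro nn_integral_mono)
    fix t :: real
    have "(t powr e / (t + lam)\<^sup>2) powr q = t powr (e * q) / (t + lam) powr (2 * q)" if "0 < t"
      using that lam by (simp add: powr_divide powr_powr mult.commute flip: powr_numeral)
    moreover note powr_mult_powr_minus_Suc[of t "e * q" n]
    ultimately have "(t powr e / (t + lam)\<^sup>2) powr q * t powr (- real (n + 1))
        = t powr (e * q - real n - 1) / (t + lam) powr (2 * q)" if "0 < t"
      using that by (simp only: times_divide_eq_left)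
    then show "ennreal ((t powr e / (t + lam)\<^sup>2) powr q * t powr (- real (n + 1)))
          * indicator {0<..<eps0} t
        \<le> ennreal (t powr (e * q - real n - 1) / (t + lam) powr (2 * q)) * indicator {0<..} t"
      by (auto simp: indicator_def)
  qed
  also have "\<dots> \<le> ennreal ((1 / (e * q - real n) + 1 / (2 * q - (e * q - real n)))
                             * lam powr (e * q - real n - 2 * q))"
    using nn_integral_powr_div_shift_le[OF lam al] by simp
  finally show ?thesis .
qed

lemma cutoff_bounded_support:
  assumes "cutoff eps chi"
  obtains d Kc where "0 < d" "\<And>t. d \<le> \<bar>t\<bar> \<Longrightarrow> chi t = 0" "\<And>t. 0 \<le> chi t" "\<And>t. chi t \<le> Kc"
    "chi \<in> borel_measurable borel"
proof -
  obtain d where d: "0 < d" "\<And>t. d \<le> \<bar>t\<bar> \<Longrightarrow> chi t = 0" and chi0: "\<And>t. 0 \<le> chi t"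
    using assms unfolding cutoff_def by blast
  have "\<And>t. chi differentiable (at t)"
    using assms unfolding cutoff_def by (metis funpow_0)
  then have cont: "continuous_on UNIV chi"
    by (simp add: differentiable_imp_continuous_within continuous_at_imp_continuous_on)
  have "bounded (chi ` {-d..d})"
    by (intro compact_imp_bounded compact_continuous_image continuous_on_subset[OF cont]) auto
  then obtain Kc where Kc: "\<forall>t\<in>{-d..d}. \<bar>chi t\<bar> \<le> Kc"
    by (auto simp: bounded_iff)
  have "chi t \<le> Kc" for t
    using Kc[rule_format, of t] Kc[rule_format, of 0] d chi0[of 0]
    by (cases "\<bar>t\<bar> \<le> d") (auto simp: abs_le_iff)
  then show thesis
    using that d chi0 borel_measurable_continuous_onI[OF cont] by blast
qed

lemma cutoff_weight_le:
  fixes chi :: "real \<Rightarrow> real"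
  assumes t: "0 < t" and lam: "0 < lam" and q: "0 < q"
    and supp: "\<And>s. d \<le> \<bar>s\<bar> \<Longrightarrow> chi s = 0" and chi0: "\<And>s. 0 \<le> chi s" and Kc: "\<And>s. chi s \<le> Kc"
  shows "(t powr e * (chi (t / lam))\<^sup>2) powr q
    \<le> (if t < d * lam then Kc powr (2 * q) * t powr (e * q) else 0)"
proof -
  have "(t powr e * (chi (t / lam))\<^sup>2) powr q = chi (t / lam) powr (2 * q) * t powr (e * q)"
    using chi0[of "t / lam"] by (simp add: powr_mult powr_powr mult.commute flip: powr_numeral)
  moreover have "chi (t / lam) = 0" if "\<not> t < d * lam"
    using that t lam by (intro supp) (simp add: field_simps)
  moreover have "chi (t / lam) powr (2 * q) \<le> Kc powr (2 * q)"
    using chi0 Kc q by (intro powr_mono2) auto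
  ultimately show ?thesis
    using q by (auto intro: mult_right_mono)
qed

lemma nn_integral_cutoff_weight_collar_le:
  fixes chi :: "real \<Rightarrow> real"
  assumes lam: "0 < lam" and q: "0 < q" and d: "0 < d" and al: "0 < e * q - real n"
    and supp: "\<And>s. d \<le> \<bar>s\<bar> \<Longrightarrow> chi s = 0" and chi0: "\<And>s. 0 \<le> chi s" and Kc: "\<And>s. chi s \<le> Kc"
  shows "(\<integral>\<^sup>+ t\<in>{0<..<eps0}. (t powr e * (chi (t / lam))\<^sup>2) powr q * t powr (- real (n + 1))
           \<partial>lborel)
    \<le> ennreal (Kc powr (2 * q) * (d * lam) powr (e * q - real n) / (e * q - real n))"
proof -
  have "(\<integral>\<^sup>+ t\<in>{0<..<eps0}. (t powr e * (chi (t / lam))\<^sup>2) powr q * t powr (- real (n + 1)) \<partial>lborel)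
      \<le> (\<integral>\<^sup>+ t. ennreal (Kc powr (2 * q))
             * (ennreal (t powr (e * q - real n - 1)) * indicator {0..d * lam} t) \<partial>lborel)"
  proof (intro nn_integral_mono)
    fix t :: real
    define w where "w = (t powr e * (chi (t / lam))\<^sup>2) powr q * t powr (- real (n + 1))"
    have "w \<le> (if t < d * lam then Kc powr (2 * q) * t powr (e * q) else 0)
        * t powr (- real (n + 1))" if "0 < t"
      unfolding w_def using cutoff_weight_le[OF that lam q supp chi0 Kc] powr_ge_zero
      by (rule mult_right_mono)
    moreover note powr_mult_powr_minus_Suc[of t "e * q" n]
    ultimately have "w \<le> (if t < d * lam then Kc powr (2 * q) * t powr (e * q - real n - 1) else 0)"
      if "0 < t"
      using that by (simp add: mult.assoc split: if_splits)
    then show "ennreal w * indicator {0<..<eps0} t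
        \<le> ennreal (Kc powr (2 * q))
          * (ennreal (t powr (e * q - real n - 1)) * indicator {0..d * lam} t)"
      by (cases "0 < t"; cases "t < d * lam")
        (simp_all add: indicator_def ennreal_mult'[symmetric] ennreal_leI ennreal_neg)
  qed
  also have "\<dots> = ennreal (Kc powr (2 * q) * (d * lam) powr (e * q - real n) / (e * q - real n))"
    using d lam al by (simp add: nn_integral_cmult nn_integral_powr_from_0 ennreal_mult'[symmetric])
  finally show ?thesis .
qed

lemma nn_integral_image_density:
  fixes g :: "'m \<Rightarrow> ennreal"
  assumes Phi: "Phi \<in> N \<rightarrow>\<^sub>M M" and S: "S \<in> sets N" and U: "Phi ` S \<in> sets M"
    and [measurable]: "d \<in> borel_measurable N"
    and vol: "\<And>A. A \<in> sets M \<Longrightarrow>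
      emeasure M (A \<inter> Phi ` S) = (\<integral>\<^sup>+ z. indicator S z * indicator A (Phi z) * d z \<partial>N)"
    and [measurable]: "g \<in> borel_measurable M"
  shows "(\<integral>\<^sup>+ m. indicator (Phi ` S) m * g m \<partial>M) = (\<integral>\<^sup>+ z. indicator S z * d z * g (Phi z) \<partial>N)"
proof -
  let ?D = "density N (\<lambda>z. indicator S z * d z)"
  have [measurable]: "S \<in> sets N" by (rule S)
  have Phi': "Phi \<in> ?D \<rightarrow>\<^sub>M M" using Phi by simp
  have restr: "density M (indicator (Phi ` S)) = distr ?D M Phi"
  proof (rule measure_eqI)
    fix A assume "A \<in> sets (density M (indicator (Phi ` S)))"
    then have A: "A \<in> sets M" by simp
    have "emeasure (density M (indicator (Phi ` S))) A = emeasure M (A \<inter> Phi ` S)"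
      using emeasure_restricted[OF U A] by (simp add: Int_commute)
    also have "\<dots> = (\<integral>\<^sup>+ z. indicator S z * d z * indicator (Phi -` A \<inter> space N) z \<partial>N)"
      using A
      by (auto simp: vol mult_ac measurable_space[OF Phi] indicator_def intro!: nn_integral_cong)
    also have "\<dots> = emeasure (distr ?D M Phi) A"
      using A Phi measurable_sets[OF Phi A] by (simp add: emeasure_distr emeasure_density)
    finally show "emeasure (density M (indicator (Phi ` S))) A = emeasure (distr ?D M Phi) A" .
  qed simp
  have "(\<integral>\<^sup>+ m. indicator (Phi ` S) m * g m \<partial>M) = (\<integral>\<^sup>+ m. g m \<partial>density M (indicator (Phi ` S)))"
    using U by (simp add: nn_integral_density)
  also have "\<dots> = (\<integral>\<^sup>+ z. g (Phi z) \<partial>?D)"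
    unfolding restr using Phi' by (simp add: nn_integral_distr)
  also have "\<dots> = (\<integral>\<^sup>+ z. indicator S z * d z * g (Phi z) \<partial>N)"
    using Phi by (simp add: nn_integral_density)
  finally show ?thesis .
qed

lemma ac_structure_collar_nn_integral_le:
  assumes ac: "ac_structure n M x eps0 Y Phi rho"
  obtains K where "0 \<le> K"
    "\<And>h :: real \<Rightarrow> real. h \<in> borel_measurable borel \<Longrightarrow> (\<And>t. 0 \<le> h t) \<Longrightarrow>
       (\<integral>\<^sup>+ m. indicator (Phi ` ({0<..<eps0} \<times> space Y)) m * ennreal (h (x m)) \<partial>M)
         \<le> ennreal K * (\<integral>\<^sup>+ t\<in>{0<..<eps0}. h t * t powr (- real (n + 1)) \<partial>lborel)"
proof -
  define S where "S = {0<..<eps0} \<times> space Y"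
  have Phi: "Phi \<in> lborel \<Otimes>\<^sub>M Y \<rightarrow>\<^sub>M M" and "Phi ` S \<in> sets M"
    and xPhi: "\<And>t y. t \<in> {0<..<eps0} \<Longrightarrow> y \<in> space Y \<Longrightarrow> x (Phi (t, y)) = t"
    and [measurable]: "rho \<in> borel_measurable (lborel \<Otimes>\<^sub>M Y)" "x \<in> borel_measurable M"
    and vol: "\<And>A. A \<in> sets M \<Longrightarrow> emeasure M (A \<inter> Phi ` S) =
        (\<integral>\<^sup>+ z. indicator S z * indicator A (Phi z) * ennreal (fst z powr (- real (n + 1)) * rho z)
           \<partial>(lborel \<Otimes>\<^sub>M Y))"
    and "finite_measure Y"
    using ac by (auto simp: ac_structure_def S_def)
  interpret Y: finite_measure Y by fact
  obtain c2 where rho: "\<And>t y. t \<in> {0<..<eps0} \<Longrightarrow> y \<in> space Y \<Longrightarrow> 0 \<le> rho (t, y) \<and> rho (t, y) \<le> c2"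
    using ac unfolding ac_structure_def by (meson less_le_not_le order.trans)
  show thesis
  proof (rule that[of "max c2 0 * measure Y (space Y)"])
    fix h :: "real \<Rightarrow> real"
    assume [measurable]: "h \<in> borel_measurable borel" and h0: "\<And>t. 0 \<le> h t"
    have "(\<integral>\<^sup>+ m. indicator (Phi ` S) m * ennreal (h (x m)) \<partial>M)
        = (\<integral>\<^sup>+ z. indicator S z * ennreal (fst z powr (- real (n + 1)) * rho z) * h (x (Phi z))
             \<partial>(lborel \<Otimes>\<^sub>M Y))"
      using Phi vol \<open>Phi ` S \<in> sets M\<close> by (intro nn_integral_image_density) (auto simp: S_def)
    also have "\<dots> \<le> (\<integral>\<^sup>+ z. (ennreal (max c2 0) * (h (fst z) * fst z powr (- real (n + 1)))
                         * indicator {0<..<eps0} (fst z)) * indicator (space Y) (snd z)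
                       \<partial>(lborel \<Otimes>\<^sub>M Y))"
    proof (intro nn_integral_mono)
      fix z :: "real \<times> 'b"
      show "indicator S z * ennreal (fst z powr (- real (n + 1)) * rho z) * h (x (Phi z))
          \<le> (ennreal (max c2 0) * (h (fst z) * fst z powr (- real (n + 1)))
               * indicator {0<..<eps0} (fst z)) * indicator (space Y) (snd z)"
      proof (cases "z \<in> S")
        case True
        then obtain t y where z: "z = (t, y)" "t \<in> {0<..<eps0}" "y \<in> space Y"
          by (auto simp: S_def)
        have "t powr (- real (n + 1)) * rho (t, y) * h t
            \<le> max c2 0 * (h t * t powr (- real (n + 1)))"
          using mult_right_mono[of "rho (t, y)" "max c2 0" "h t * t powr (- real (n + 1))"]
            rho[OF z(2,3)] h0[of t] by (simp add: mult_ac)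
        then show ?thesis
          using True z rho[OF z(2,3)] by (simp add: xPhi ennreal_mult'[symmetric] ennreal_leI)
      qed simp
    qed
    also have "\<dots> = ennreal (max c2 0 * measure Y (space Y))
                     * (\<integral>\<^sup>+ t\<in>{0<..<eps0}. h t * t powr (- real (n + 1)) \<partial>lborel)"
      by (subst nn_integral_pair_measure_mult)
        (auto simp: nn_integral_cmult Y.sigma_finite_measure_axioms Y.emeasure_eq_measure
          ennreal_mult' mult_ac)
    finally show "(\<integral>\<^sup>+ m. indicator (Phi ` ({0<..<eps0} \<times> space Y)) m * ennreal (h (x m)) \<partial>M)
        \<le> ennreal (max c2 0 * measure Y (space Y))
          * (\<integral>\<^sup>+ t\<in>{0<..<eps0}. h t * t powr (- real (n + 1)) \<partial>lborel)"
      by (simp add: S_def)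
  qed simp
qed

(* The values of x off the collar lie in [c, B]. *)
lemma ac_structure_nn_integral_le:
  assumes ac: "ac_structure n M x eps0 Y Phi rho"
  obtains c B K where "0 < c"
    "\<And>h P Q. h \<in> borel_measurable borel \<Longrightarrow> (\<And>t. 0 \<le> h t) \<Longrightarrow> 0 \<le> P \<Longrightarrow> 0 \<le> Q \<Longrightarrow>
       (\<integral>\<^sup>+ t\<in>{0<..<eps0}. h t * t powr (- real (n + 1)) \<partial>lborel) \<le> ennreal P \<Longrightarrow>
       (\<And>t. c \<le> t \<Longrightarrow> t \<le> B \<Longrightarrow> h t \<le> Q) \<Longrightarrow>
       (\<integral>\<^sup>+ m. h (x m) \<partial>M) \<le> ennreal (K * (P + Q))"
proof -
  define U where "U = Phi ` ({0<..<eps0} \<times> space Y)"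
  obtain K1 where "0 \<le> K1" and collar_le: "\<And>h :: real \<Rightarrow> real. h \<in> borel_measurable borel \<Longrightarrow>
       (\<And>t. 0 \<le> h t) \<Longrightarrow> (\<integral>\<^sup>+ m. indicator U m * ennreal (h (x m)) \<partial>M)
         \<le> ennreal K1 * (\<integral>\<^sup>+ t\<in>{0<..<eps0}. h t * t powr (- real (n + 1)) \<partial>lborel)"
    using ac_structure_collar_nn_integral_le[OF ac] unfolding U_def by blast
  have [measurable]: "U \<in> sets M" "x \<in> borel_measurable M" and V: "emeasure M (space M - U) < \<infinity>"
    using ac by (auto simp: ac_structure_def U_def)
  obtain c B where c: "0 < c" and cB: "\<And>m. m \<in> space M - U \<Longrightarrow> c \<le> x m \<and> x m \<le> B"
    using ac unfolding ac_structure_def U_def by blast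
  define K where "K = K1 + measure M (space M - U)"
  show thesis
  proof (rule that[of c B K])
    fix h :: "real \<Rightarrow> real" and P Q
    assume [measurable]: "h \<in> borel_measurable borel" and h0: "\<And>t. 0 \<le> h t"
      and "0 \<le> P" "0 \<le> Q"
      and P: "(\<integral>\<^sup>+ t\<in>{0<..<eps0}. h t * t powr (- real (n + 1)) \<partial>lborel) \<le> ennreal P"
      and Q: "\<And>t. c \<le> t \<Longrightarrow> t \<le> B \<Longrightarrow> h t \<le> Q"
    have collar: "(\<integral>\<^sup>+ m. indicator U m * ennreal (h (x m)) \<partial>M) \<le> ennreal (K1 * P)"
      using order_trans[OF collar_le mult_left_mono[OF P]] h0 \<open>0 \<le> K1\<close> \<open>0 \<le> P\<close>
      by (simp add: ennreal_mult)
    have "(\<integral>\<^sup>+ m. indicator (space M - U) m * ennreal (h (x m)) \<partial>M)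
        \<le> (\<integral>\<^sup>+ m. ennreal Q * indicator (space M - U) m \<partial>M)"
      using cB Q by (intro nn_integral_mono) (auto simp: indicator_def intro!: ennreal_leI)
    also have "\<dots> = ennreal (Q * measure M (space M - U))"
      using V \<open>0 \<le> Q\<close>
      by (simp add: nn_integral_cmult_indicator emeasure_eq_ennreal_measure ennreal_mult)
    finally have compact: "(\<integral>\<^sup>+ m. indicator (space M - U) m * ennreal (h (x m)) \<partial>M)
        \<le> ennreal (Q * measure M (space M - U))" .
    have "(\<integral>\<^sup>+ m. h (x m) \<partial>M)
        = (\<integral>\<^sup>+ m. indicator U m * ennreal (h (x m)) \<partial>M)
          + (\<integral>\<^sup>+ m. indicator (space M - U) m * ennreal (h (x m)) \<partial>M)"
      by (subst nn_integral_add[symmetric]) (auto intro!: nn_integral_cong simp: indicator_def)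
    also have "\<dots> \<le> ennreal (K1 * P + Q * measure M (space M - U))"
      using add_mono[OF collar compact] \<open>0 \<le> K1\<close> \<open>0 \<le> P\<close> \<open>0 \<le> Q\<close>
      by (simp add: ennreal_plus[symmetric] del: ennreal_plus)
    also have "\<dots> \<le> ennreal (K * (P + Q))"
      using \<open>0 \<le> K1\<close> \<open>0 \<le> P\<close> \<open>0 \<le> Q\<close> by (intro ennreal_leI) (simp add: K_def algebra_simps add_mono)
    finally show "(\<integral>\<^sup>+ m. h (x m) \<partial>M) \<le> ennreal (K * (P + Q))" .
  qed (fact c)
qed

lemma nn_integral_cutoff_weight_le:
  fixes chi :: "real \<Rightarrow> real"
  assumes ac: "ac_structure n M x eps0 Y Phi rho" and "cutoff eps chi"
    and q: "0 < q" and n: "real n < (real n - 1) * q"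
  obtains D where
    "\<And>lam. 0 < lam \<Longrightarrow> (\<integral>\<^sup>+ m. (x m powr (real n - 1) * (chi (x m / lam))\<^sup>2) powr q \<partial>M)
       \<le> ennreal (D * lam powr ((real n - 1) * q - real n))"
proof -
  define al where "al = (real n - 1) * q - real n"
  have al: "0 < al" "0 \<le> (real n - 1) * q" using n q by (auto simp: al_def)
  obtain c B K where c: "0 < c"
    and int_le: "\<And>h P Q. h \<in> borel_measurable borel \<Longrightarrow> (\<And>t. 0 \<le> h t) \<Longrightarrow> 0 \<le> P \<Longrightarrow> 0 \<le> Q \<Longrightarrow>
       (\<integral>\<^sup>+ t\<in>{0<..<eps0}. h t * t powr (- real (n + 1)) \<partial>lborel) \<le> ennreal P \<Longrightarrow>
       (\<And>t. c \<le> t \<Longrightarrow> t \<le> B \<Longrightarrow> h t \<le> Q) \<Longrightarrow> (\<integral>\<^sup>+ m. h (x m) \<partial>M) \<le> ennreal (K * (P + Q))"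
    using ac_structure_nn_integral_le[OF ac] by blast
  obtain d Kc where d: "0 < d" and supp: "\<And>t. d \<le> \<bar>t\<bar> \<Longrightarrow> chi t = 0"
    and chi0: "\<And>t. 0 \<le> chi t" and Kc: "\<And>t. chi t \<le> Kc"
    and [measurable]: "chi \<in> borel_measurable borel"
    using cutoff_bounded_support[OF \<open>cutoff eps chi\<close>] by blast
  define Kq where "Kq = Kc powr (2 * q)"
  define D where "D = K * Kq * (d powr al / al + B powr ((real n - 1) * q) * (d / c) powr al)"
  show thesis
  proof (rule that[of D])
    fix lam :: real assume lam: "0 < lam"
    define h where "h t = (t powr (real n - 1) * (chi (t / lam))\<^sup>2) powr q" for t
    define P where "P = Kq * (d * lam) powr al / al"
    define Q where "Q = Kq * B powr ((real n - 1) * q) * ((d / c) powr al * lam powr al)"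
    have P: "(\<integral>\<^sup>+ t\<in>{0<..<eps0}. h t * t powr (- real (n + 1)) \<partial>lborel) \<le> ennreal P"
      unfolding h_def P_def Kq_def al_def
      by (rule nn_integral_cutoff_weight_collar_le[OF lam q d _ supp chi0 Kc])
        (use al al_def in simp)
    have Q: "h t \<le> Q" if "c \<le> t" "t \<le> B" for t
    proof (cases "t < d * lam")
      case True
      have "h t \<le> Kq * t powr ((real n - 1) * q)"
        using cutoff_weight_le[of t lam q d chi Kc] True that c lam q supp chi0 Kc
        by (simp add: h_def Kq_def)
      also have "\<dots> \<le> Kq * B powr ((real n - 1) * q) * 1"
        using that c al by (simp add: Kq_def mult_left_mono powr_mono2)
      also have "\<dots> \<le> Kq * B powr ((real n - 1) * q) * (d * lam / c) powr al"
        using True that c al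
        by (intro mult_left_mono ge_one_powr_ge_zero) (auto simp: Kq_def field_simps)
      finally show ?thesis
        using c d lam by (simp add: Q_def powr_mult powr_divide)
    next
      case False
      then show ?thesis
        using cutoff_weight_le[of t lam q d chi Kc] that c lam q supp chi0 Kc
        by (simp add: h_def Q_def Kq_def)
    qed
    have "(\<integral>\<^sup>+ m. h (x m) \<partial>M) \<le> ennreal (K * (P + Q))"
      using al by (intro int_le P Q) (auto simp: h_def P_def Q_def Kq_def)
    also have "K * (P + Q) = D * lam powr al"
      using d lam by (simp add: D_def P_def Q_def powr_mult algebra_simps)
    finally show "(\<integral>\<^sup>+ m. (x m powr (real n - 1) * (chi (x m / lam))\<^sup>2) powr q \<partial>M)
        \<le> ennreal (D * lam powr ((real n - 1) * q - real n))"
      by (simp add: h_def al_def)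
  qed
qed

lemma nn_integral_decay_weight_le:
  assumes ac: "ac_structure n M x eps0 Y Phi rho"
    and q: "0 < q" and n: "real n < (real n - 1) * q" "(real n - 1) * q < real n + 2 * q"
  obtains D where
    "\<And>lam. 0 < lam \<Longrightarrow> lam \<le> L \<Longrightarrow> (\<integral>\<^sup>+ m. (x m powr (real n - 1) / (x m + lam)\<^sup>2) powr q \<partial>M)
       \<le> ennreal (D * lam powr ((real n - 1) * q - real n - 2 * q))"
proof -
  define al where "al = (real n - 1) * q - real n"
  have al: "0 < al" "al < 2 * q" "0 \<le> (real n - 1) * q" using n q by (auto simp: al_def)
  obtain c B K where c: "0 < c"
    and int_le: "\<And>h P Q. h \<in> borel_measurable borel \<Longrightarrow> (\<And>t. 0 \<le> h t) \<Longrightarrow> 0 \<le> P \<Longrightarrow> 0 \<le> Q \<Longrightarrow>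
       (\<integral>\<^sup>+ t\<in>{0<..<eps0}. h t * t powr (- real (n + 1)) \<partial>lborel) \<le> ennreal P \<Longrightarrow>
       (\<And>t. c \<le> t \<Longrightarrow> t \<le> B \<Longrightarrow> h t \<le> Q) \<Longrightarrow> (\<integral>\<^sup>+ m. h (x m) \<partial>M) \<le> ennreal (K * (P + Q))"
    using ac_structure_nn_integral_le[OF ac] by blast
  define Kp where "Kp = 1 / al + 1 / (2 * q - al)"
  define Kq where "Kq = B powr ((real n - 1) * q) / c powr (2 * q) * L powr (2 * q - al)"
  define D where "D = K * (Kp + Kq)"
  show thesis
  proof (rule that[of D])
    fix lam :: real assume lam: "0 < lam" "lam \<le> L"
    define h where "h t = (t powr (real n - 1) / (t + lam)\<^sup>2) powr q" for t
    define P where "P = Kp * lam powr (al - 2 * q)"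
    define Q where "Q = Kq * lam powr (al - 2 * q)"
    have P: "(\<integral>\<^sup>+ t\<in>{0<..<eps0}. h t * t powr (- real (n + 1)) \<partial>lborel) \<le> ennreal P"
      unfolding h_def P_def Kp_def al_def
      by (rule nn_integral_decay_weight_collar_le) (use lam al al_def in \<open>auto simp: mult.commute\<close>)
    have Q: "h t \<le> Q" if "c \<le> t" "t \<le> B" for t
    proof -
      have "h t = t powr ((real n - 1) * q) / (t + lam) powr (2 * q)"
        using that c lam by (simp add: h_def powr_divide powr_powr mult.commute flip: powr_numeral)
      also have "\<dots> \<le> B powr ((real n - 1) * q) / c powr (2 * q) * 1"
        using that c lam al by simp (intro frac_le powr_mono2; simp)
      also have "\<dots> \<le> B powr ((real n - 1) * q) / c powr (2 * q) * (L / lam) powr (2 * q - al)"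
        using lam al by (intro mult_left_mono ge_one_powr_ge_zero) auto
      also have "\<dots> = Q"
        using lam powr_minus_divide[of lam "2 * q - al"] by (simp add: Q_def Kq_def powr_divide)
      finally show ?thesis .
    qed
    have "(\<integral>\<^sup>+ m. h (x m) \<partial>M) \<le> ennreal (K * (P + Q))"
      using al by (intro int_le P Q) (auto simp: h_def P_def Q_def Kp_def Kq_def)
    also have "K * (P + Q) = D * lam powr (al - 2 * q)"
      by (simp add: D_def P_def Q_def algebra_simps)
    finally show "(\<integral>\<^sup>+ m. (x m powr (real n - 1) / (x m + lam)\<^sup>2) powr q \<partial>M)
        \<le> ennreal (D * lam powr ((real n - 1) * q - real n - 2 * q))"
      by (simp add: h_def al_def)
  qed
qed

lemma conjugate_exponent_range:
  fixes n :: nat and p q :: real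
  assumes p: "1 < p" "real n < 3 * p" "p < real n" and q: "q = p / (p - 1)"
  shows "1 < q" "1/p + 1/q = 1" "real n < (real n - 1) * q" "(real n - 1) * q < real n + 2 * q"
    "(((real n - 1) * q - real n) + ((real n - 1) * q - real n - 2 * q)) * (1 / (2 * q))
       = - 2 + real n / p"
proof -
  have al: "(real n - 1) * q - real n = (real n - p) / (p - 1)" and two_q: "2 * q = 2 * p / (p - 1)"
    using p by (simp_all add: q field_simps)
  have "0 < (real n - 1) * q - real n" "(real n - 1) * q - real n < 2 * q"
    unfolding al two_q using p by (auto intro!: divide_strict_right_mono)
  then show "1 < q" "1/p + 1/q = 1" "real n < (real n - 1) * q" "(real n - 1) * q < real n + 2 * q"
    using p by (auto simp: q field_simps)
  have "(((real n - 1) * q - real n) + ((real n - 1) * q - real n - 2 * q)) * (1 / (2 * q))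
      = ((real n - 1) * q - real n) / q - 1"
    using \<open>1 < q\<close> by (simp add: field_simps)
  also have "((real n - 1) * q - real n) / q = real n / p - 1"
    using p by (simp add: al q field_simps)
  finally show "(((real n - 1) * q - real n) + ((real n - 1) * q - real n - 2 * q)) * (1 / (2 * q))
       = - 2 + real n / p" by simp
qed

lemma powr_scaled_mult:
  fixes a b lam s t r :: real
  shows "(a * lam powr s * (b * lam powr t)) powr r = (a * b) powr r * lam powr ((s + t) * r)"
proof -
  have "a * lam powr s * (b * lam powr t) = (a * b) * lam powr (s + t)"
    by (simp only: powr_add) (simp add: mult_ac)
  then show ?thesis
    by (simp only: powr_mult powr_powr)
qed

theorem lemma5p4:
  fixes n :: nat and M :: "'m measure" and x :: "'m \<Rightarrow> real"
    and eps0 :: real and Y :: "'y measure" and Phi :: "real \<times> 'y \<Rightarrow> 'm"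
    and rho :: "real \<times> 'y \<Rightarrow> real" and eps :: real and chi :: "real \<Rightarrow> real"
    and C p :: real
  assumes "3 \<le> n"
    and "ac_structure n M x eps0 Y Phi rho"
    and "cutoff eps chi"
    and "real n / 2 \<le> p" and "p \<le> (real n + 1) / 2"
  shows "\<exists>C'. \<forall>lam K W1 W2.
     0 < lam \<and> lam \<le> 3 \<and>
     (\<lambda>(m, m'). K m m') \<in> borel_measurable (M \<Otimes>\<^sub>M M) \<and>
     (\<forall>m\<in>space M. \<forall>m'\<in>space M.
        norm (K m m') \<le> C * (x m * x m') powr ((real n - 1) / 2)
            * (chi (x m / lam) + chi (x m' / lam)) / (x m + x m' + lam)) \<and>
     in_Lp M (2 * p) W1 \<and> in_Lp M (2 * p) W2
     \<longrightarrow> hilbert_schmidt M (\<lambda>(m, m'). W1 m * K m m' * W2 m') \<and>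
         hs_norm M (\<lambda>(m, m'). W1 m * K m m' * W2 m')
           \<le> C' * lam powr (- 2 + real n / p) * Lp_norm M (2 * p) W1 * Lp_norm M (2 * p) W2"
proof -
  note ac = assms(2)
  have p: "1 < p" "real n < 3 * p" "p < real n" using assms by auto
  define q where "q = p / (p - 1)"
  note q = conjugate_exponent_range[OF p q_def]
  obtain DF where DF: "\<And>lam. 0 < lam \<Longrightarrow>
      (\<integral>\<^sup>+ m. (x m powr (real n - 1) * (chi (x m / lam))\<^sup>2) powr q \<partial>M)
        \<le> ennreal (DF * lam powr ((real n - 1) * q - real n))"
    using nn_integral_cutoff_weight_le[OF ac \<open>cutoff eps chi\<close> _ q(3)] q(1) by auto
  obtain DG where DG: "\<And>lam. 0 < lam \<Longrightarrow> lam \<le> 3 \<Longrightarrow>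
      (\<integral>\<^sup>+ m. (x m powr (real n - 1) / (x m + lam)\<^sup>2) powr q \<partial>M)
        \<le> ennreal (DG * lam powr ((real n - 1) * q - real n - 2 * q))"
    using nn_integral_decay_weight_le[OF ac _ q(3,4), of 3] q(1) by auto
  have "sigma_finite_measure M" and [measurable]: "x \<in> borel_measurable M"
    and x0: "\<forall>m\<in>space M. 0 < x m"
    using ac by (auto simp: ac_structure_def)
  have [measurable]: "chi \<in> borel_measurable borel"
    using cutoff_bounded_support[OF \<open>cutoff eps chi\<close>] by blast
  show ?thesis
  proof (intro exI[of _ "2 * \<bar>C\<bar> * (DF * DG) powr (1 / (2 * q))"] allI impI, elim conjE)
    fix lam :: real and K :: "'m \<Rightarrow> 'm \<Rightarrow> complex" and W1 W2 :: "'m \<Rightarrow> complex"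
    assume lam: "0 < lam" "lam \<le> 3"
      and [measurable]: "(\<lambda>(m, m'). K m m') \<in> borel_measurable (M \<Otimes>\<^sub>M M)"
      and K: "\<forall>m\<in>space M. \<forall>m'\<in>space M. norm (K m m') \<le> C * (x m * x m') powr ((real n - 1) / 2)
            * (chi (x m / lam) + chi (x m' / lam)) / (x m + x m' + lam)"
      and W: "in_Lp M (2 * p) W1" "in_Lp M (2 * p) W2"
    have kernel: "(norm (K m m'))\<^sup>2 \<le> 2 * C\<^sup>2 *
        (x m powr (real n - 1) * (chi (x m / lam))\<^sup>2 * (x m' powr (real n - 1) / (x m' + lam)\<^sup>2)
         + x m powr (real n - 1) / (x m + lam)\<^sup>2 * (x m' powr (real n - 1) * (chi (x m' / lam))\<^sup>2))"
      if "m \<in> space M" "m' \<in> space M" for m m'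
      using K that x0 lam by (intro order_trans[OF power_mono kernel_majorant_sq_le]) auto
    have "hilbert_schmidt M (\<lambda>(m, m'). W1 m * K m m' * W2 m') \<and>
         hs_norm M (\<lambda>(m, m'). W1 m * K m m' * W2 m')
           \<le> sqrt (2 * (2 * C\<^sup>2)) * (DF * lam powr ((real n - 1) * q - real n)
                * (DG * lam powr ((real n - 1) * q - real n - 2 * q))) powr (1 / (2 * q))
             * Lp_norm M (2 * p) W1 * Lp_norm M (2 * p) W2"
      by (rule hilbert_schmidt_weighted_kernel[OF \<open>sigma_finite_measure M\<close> p(1) q(1,2) _ _ _ _
          DF[OF lam(1)] DG[OF lam] _ kernel _ W]) auto
    then show "hilbert_schmidt M (\<lambda>(m, m'). W1 m * K m m' * W2 m') \<and>
         hs_norm M (\<lambda>(m, m'). W1 m * K m m' * W2 m')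
           \<le> 2 * \<bar>C\<bar> * (DF * DG) powr (1 / (2 * q)) * lam powr (- 2 + real n / p)
             * Lp_norm M (2 * p) W1 * Lp_norm M (2 * p) W2"
      by (simp only: powr_scaled_mult q(5)) (simp add: real_sqrt_mult mult_ac)
  qed
qed

end
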